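(* Let $d,J\ge1$. Let $F,G$ be complex-valued functions of $(m,N)$ where $m=(m_1,\dots,m_d)$ is a $d$-tuple of positive integers and $N$ a square-free positive integer. Let $A(a,m)$ be a complex-valued function and $\alpha(a,m)$ a $d$-tuple of positive integers, both defined for $J$-tuples $a$ and $d$-tuples $m$ of positive integers, and assume: (i) $A$ and $\alpha$ are multiplicative in the sense that if all entries of $(a,m)$ are supported on primes dividing $L_1$ and all entries of $(a',m')$ on primes dividing $L_2$ with $(L_1,L_2)=1$, then $A(aa',mm')=A(a,m)A(a',m')$ and $\alpha(aa',mm')=\alpha(a,m)\alpha(a',m')$ (componentwise products); (ii) for each prime $p$, if all entries of $(a,m)$ are powers of $p$ then all entries of $\alpha(a,m)$ are powers of $p$. Suppose that for every square-free $N$ and every $m$, \[ F(m,N)=\sum_{LM=N}\sum_{a\mid L^\infty}A(a,m_L)\,G\Big(\alpha(a,m_L)\frac{m}{m_L},M\Big), \] with all sums absolutely convergent. Then for every square-free $N$ and every $m$, \[ G(m,N)=\sum_{LM=N}\mu(L)\sum_{a\mid L^\infty}A(a,m_L)\,F\Big(\alpha(a,m_L)\frac{m}{m_L},M\Big). \]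
   Context: For a tuple $m=(m_1,\dots,m_d)$ and a positive integer $L$, $m_L$ denotes the tuple whose $i$-th entry is the largest divisor of $m_i$ all of whose prime factors divide $L$ (so $m_L\mid L^\infty$ and $(m/m_L,L)=1$ componentwise); products and quotients of tuples are componentwise. $a\mid L^\infty$ for a tuple $a=(a_1,\dots,a_J)$ of positive integers means each $a_i$ has all its prime factors dividing $L$. *)

theory Defs
  imports "HOL-Analysis.Analysis" "HOL-Computational_Algebra.Squarefree"
begin

definition supp_in :: "nat \<Rightarrow> nat \<Rightarrow> bool" where
  "supp_in L k \<longleftrightarrow> (\<forall>p. prime p \<longrightarrow> p dvd k \<longrightarrow> p dvd L)"

(* the L-part of k: largest divisor of k all of whose prime factors divide L (k > 0) *)
definition Lpart :: "nat \<Rightarrow> nat \<Rightarrow> nat" where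
  "Lpart L k = Max {e. e dvd k \<and> supp_in L e}"

definition tpart :: "nat \<Rightarrow> ('i \<Rightarrow> nat) \<Rightarrow> ('i \<Rightarrow> nat)" where
  "tpart L m = (\<lambda>i. Lpart L (m i))"

definition pos_tuple :: "('i \<Rightarrow> nat) \<Rightarrow> bool" where
  "pos_tuple a \<longleftrightarrow> (\<forall>i. 0 < a i)"

definition tdvd_inf :: "('i \<Rightarrow> nat) \<Rightarrow> nat \<Rightarrow> bool" where
  "tdvd_inf a L \<longleftrightarrow> pos_tuple a \<and> (\<forall>i. supp_in L (a i))"

definition all_powers_of :: "nat \<Rightarrow> ('i \<Rightarrow> nat) \<Rightarrow> bool" where
  "all_powers_of p a \<longleftrightarrow> (\<forall>i. \<exists>k. a i = p ^ k)"

definition mu :: "nat \<Rightarrow> int" where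
  "mu n = (if squarefree n then (-1) ^ card (prime_factors n) else 0)"

end

theory Submission
  imports Defs
begin

text \<open>Write \<open>T(K)\<close> for the \<open>K\<close>-term of the expansion of \<open>G(m, N)\<close>, a sum over \<open>c | K\<^sup>\<infinity>\<close>.
  Expanding \<open>F\<close> on the right-hand side gives, for each \<open>L | N\<close> and \<open>L' | N/L\<close>, the twist
  \<open>\<alpha>(a, m\<^sub>L) m / m\<^sub>L\<close> of \<open>m\<close> by \<open>(a, L)\<close> followed by a twist by \<open>(b, L')\<close>. As \<open>\<alpha>(a, m\<^sub>L)\<close> is supported on the primes of \<open>L\<close>
  (by locality and multiplicativity), the \<open>L'\<close>-part of the once-twisted tuple is still that of
  \<open>m\<close>, and multiplicativity of \<open>A\<close> and \<open>\<alpha>\<close> merges the two twists into the single twist by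
  \<open>(ab, LL')\<close>. Since \<open>(a, b) \<mapsto> ab\<close> is a bijection onto the tuples dividing \<open>(LL')\<^sup>\<infinity>\<close>, the
  double sum is \<open>T(LL')\<close>, so the right-hand side equals the sum over \<open>L | N\<close> of \<open>\<mu>(L)\<close> times the
  sum of \<open>T(K)\<close> over \<open>L | K | N\<close>. Moebius inversion leaves \<open>T(1) = G(m, N)\<close>.\<close>

section \<open>Prime support\<close>

lemma supp_in_1: "supp_in L 1"
  by (simp add: supp_in_def)

lemma supp_in_mult: "supp_in L x \<Longrightarrow> supp_in L y \<Longrightarrow> supp_in L (x * y)"
  by (auto simp: supp_in_def prime_dvd_mult_iff)

lemma supp_in_mono: "supp_in L x \<Longrightarrow> L dvd L' \<Longrightarrow> supp_in L' x"
  by (auto simp: supp_in_def intro: dvd_trans)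

lemma supp_in_trans: "supp_in L' L \<Longrightarrow> supp_in L x \<Longrightarrow> supp_in L' x"
  by (simp add: supp_in_def)

lemma supp_in_prime_power: "prime p \<Longrightarrow> supp_in p (p ^ k)"
  by (auto simp: supp_in_def dest: prime_dvd_power primes_dvd_imp_eq)

lemma supp_in_prime_imp_power:
  assumes "prime p" "0 < x" "supp_in p x"
  shows "x = p ^ multiplicity p x"
proof -
  have "prime_factors x \<subseteq> {p}"
  proof
    fix q assume "q \<in> prime_factors x"
    then have "prime q" "q dvd p"
      using assms(3) by (auto simp: supp_in_def in_prime_factors_iff)
    with assms(1) show "q \<in> {p}"
      by (simp add: primes_dvd_imp_eq)
  qed
  then have "(\<Prod>q\<in>prime_factors x. q ^ multiplicity q x) = (\<Prod>q\<in>{p}. q ^ multiplicity q x)"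
    using assms(1) by (intro prod.mono_neutral_left) (auto simp: in_prime_factors_iff not_dvd_imp_multiplicity_0)
  then show ?thesis
    using prod_prime_factors[of x] assms(2) by simp
qed

lemma not_coprime_prime_divisorE:
  fixes a b :: nat
  assumes "\<not> coprime a b"
  obtains p where "prime p" "p dvd a" "p dvd b"
proof -
  obtain c where "c dvd a" "c dvd b" "c \<noteq> 1"
    using assms by (auto elim: not_coprimeE)
  with that show thesis
    using prime_factor_nat dvd_trans by metis
qed

lemma coprime_if_supp_in:
  fixes x y L :: nat
  assumes "supp_in L x" "coprime y L"
  shows "coprime x y"
proof (rule ccontr)
  assume "\<not> coprime x y"
  then obtain p where "prime p" "p dvd x" "p dvd y"
    by (rule not_coprime_prime_divisorE)
  moreover have "p dvd L"
    using assms(1) \<open>prime p\<close> \<open>p dvd x\<close> by (simp add: supp_in_def)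
  ultimately show False
    using coprime_common_divisor[OF assms(2)] not_prime_unit by blast
qed

lemma supp_in_coprime_factorization:
  assumes "0 < k"
  obtains e f where "k = e * f" "supp_in L e" "coprime f L"
  using assms
proof (induction k arbitrary: thesis rule: less_induct)
  case (less k)
  show ?case
  proof (cases "coprime k L")
    case True
    then show ?thesis by (intro less.prems(1)[of 1 k]) (simp_all add: supp_in_def)
  next
    case False
    then obtain p where p: "prime p" "p dvd k" "p dvd L"
      by (rule not_coprime_prime_divisorE)
    from \<open>p dvd k\<close> obtain k' where k': "k = p * k'" ..
    with less.prems(2) prime_gt_1_nat[OF p(1)] have "k' < k" "0 < k'"
      by auto
    then obtain e f where "k' = e * f" "supp_in L e" "coprime f L"
      using less.IH by blast
    moreover have "supp_in L p"
      using p by (auto simp: supp_in_def dest: primes_dvd_imp_eq)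
    ultimately show ?thesis
      using less.prems(1)[of "p * e" f] k' by (simp add: supp_in_mult mult.assoc)
  qed
qed

section \<open>The \<open>L\<close>-part of a number and of a tuple\<close>

lemma Lpart_eqI:
  assumes "k = e * f" "0 < k" "supp_in L e" "coprime f L"
  shows "Lpart L k = e"
  unfolding Lpart_def
proof (rule Max_eqI)
  show "finite {d. d dvd k \<and> supp_in L d}"
    using assms(2) by simp
  show "e \<in> {d. d dvd k \<and> supp_in L d}"
    using assms(1,3) by simp
  fix d assume "d \<in> {d. d dvd k \<and> supp_in L d}"
  then have "d dvd e * f" "coprime d f"
    using assms(1,4) coprime_if_supp_in by auto
  then have "d dvd e"
    by (simp add: coprime_dvd_mult_left_iff)
  then show "d \<le> e"
    using assms(1,2) by (simp add: dvd_imp_le)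
qed

lemma LpartE:
  assumes "0 < k"
  obtains f where "Lpart L k * f = k" "supp_in L (Lpart L k)" "coprime f L"
proof -
  obtain e f where ef: "k = e * f" "supp_in L e" "coprime f L"
    using supp_in_coprime_factorization[OF assms] .
  then have "Lpart L k = e"
    using assms by (intro Lpart_eqI)
  with ef show thesis
    by (intro that[of f]) simp_all
qed

lemma Lpart_dvd: "0 < k \<Longrightarrow> Lpart L k dvd k"
  by (erule LpartE[where L = L]) (erule dvdI[OF sym])

lemma Lpart_pos: "0 < k \<Longrightarrow> 0 < Lpart L k"
  using Lpart_dvd[of k L] by (intro gr0I) auto

lemma supp_in_Lpart: "0 < k \<Longrightarrow> supp_in L (Lpart L k)"
  by (erule LpartE[where L = L])

lemma Lpart_eq_self: "0 < k \<Longrightarrow> supp_in L k \<Longrightarrow> Lpart L k = k"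
  by (rule Lpart_eqI[of _ _ 1]) simp_all

lemma Lpart_eq_1: "0 < k \<Longrightarrow> coprime k L \<Longrightarrow> Lpart L k = 1"
  by (rule Lpart_eqI[of _ 1 k]) (simp_all add: supp_in_def)

lemma Lpart_mult:
  assumes "0 < x" "0 < y"
  shows "Lpart L (x * y) = Lpart L x * Lpart L y"
proof -
  obtain f g where f: "Lpart L x * f = x" "coprime f L" and g: "Lpart L y * g = y" "coprime g L"
    using LpartE[OF assms(1)] LpartE[OF assms(2)] by metis
  show ?thesis
  proof (rule Lpart_eqI[of _ _ "f * g"])
    show "x * y = Lpart L x * Lpart L y * (f * g)"
      by (subst f(1)[symmetric], subst g(1)[symmetric]) (simp only: ac_simps)
    show "supp_in L (Lpart L x * Lpart L y)"
      using assms by (simp add: supp_in_Lpart supp_in_mult)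
  qed (use assms f(2) g(2) in auto)
qed

lemma Lpart_mult_coprime:
  assumes "coprime L L'" "0 < k"
  shows "Lpart (L * L') k = Lpart L k * Lpart L' k"
proof -
  obtain f where f: "Lpart L k * f = k" "supp_in L (Lpart L k)" "coprime f L"
    using LpartE[OF assms(2)] .
  have pos: "0 < Lpart L k" "0 < f"
    using Lpart_pos[OF assms(2)] f(1) assms(2) by (auto intro: gr0I)
  obtain g where g: "Lpart L' f * g = f" "supp_in L' (Lpart L' f)" "coprime g L'"
    using LpartE[OF pos(2)] .
  have "coprime (Lpart L k) L'"
    using coprime_if_supp_in[OF f(2)] assms(1) by (simp add: coprime_commute)
  then have "Lpart L' (Lpart L k) = 1"
    by (rule Lpart_eq_1[OF pos(1)])
  then have "Lpart L' k = Lpart L' f"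
    using Lpart_mult[OF pos, of L'] f(1) by simp
  moreover have "Lpart (L * L') k = Lpart L k * Lpart L' f"
  proof (rule Lpart_eqI[of _ _ g])
    show "k = Lpart L k * Lpart L' f * g"
      using f(1) g(1) by (simp add: mult.assoc)
    show "supp_in (L * L') (Lpart L k * Lpart L' f)"
      using supp_in_mono[OF f(2), of "L * L'"] supp_in_mono[OF g(2), of "L * L'"]
      by (simp add: supp_in_mult)
    have "coprime g L"
      using f(3) g(1) by (metis coprime_mult_left_iff)
    then show "coprime g (L * L')"
      using g(3) by simp
  qed (use assms(2) in simp)
  ultimately show ?thesis
    by simp
qed

lemma
  fixes L L' x y :: nat
  assumes "coprime L L'" "0 < x" "0 < y" "supp_in L y"
  shows Lpart_mult_cofactor: "Lpart L' (y * (x div Lpart L x)) = Lpart L' x"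
    and mult_cofactor_div_Lpart: "y * (x div Lpart L x) div Lpart L' x = y * (x div Lpart (L * L') x)"
proof -
  define e where "e = Lpart L x"
  define r where "r = x div e"
  have "e * r = x" "0 < e" "supp_in L e"
    using Lpart_dvd[OF assms(2)] Lpart_pos[OF assms(2)] supp_in_Lpart[OF assms(2)]
    by (simp_all add: e_def r_def)
  then have "0 < r"
    using assms(2) by (auto intro: gr0I)
  have "Lpart L' z = 1" if "0 < z" "supp_in L z" for z
    using that Lpart_eq_1 coprime_if_supp_in[OF that(2)] assms(1) by (simp add: coprime_commute)
  then have "Lpart L' e = 1" "Lpart L' y = 1"
    using \<open>0 < e\<close> \<open>supp_in L e\<close> assms(3,4) by simp_all
  then have r: "Lpart L' x = Lpart L' r" "Lpart L' (y * r) = Lpart L' r"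
    using Lpart_mult[OF \<open>0 < e\<close> \<open>0 < r\<close>, of L'] Lpart_mult[OF assms(3) \<open>0 < r\<close>, of L'] \<open>e * r = x\<close>
    by simp_all
  then show "Lpart L' (y * (x div Lpart L x)) = Lpart L' x"
    by (simp add: e_def r_def)
  have "y * r div Lpart L' r = y * (r div Lpart L' r)"
    using Lpart_dvd[OF \<open>0 < r\<close>] by (simp add: div_mult_swap)
  also have "r div Lpart L' r = x div (e * Lpart L' r)"
    by (simp add: r_def div_mult2_eq)
  also have "e * Lpart L' r = Lpart (L * L') x"
    using Lpart_mult_coprime[OF assms(1,2)] r(1) by (simp add: e_def)
  finally show "y * (x div Lpart L x) div Lpart L' x = y * (x div Lpart (L * L') x)"
    using r(1) by (simp add: e_def r_def)
qed

lemma tpart_tdvd_inf: "pos_tuple m \<Longrightarrow> tdvd_inf (tpart L m) L"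
  by (simp add: tdvd_inf_def pos_tuple_def tpart_def Lpart_pos supp_in_Lpart)

lemma tpart_eq_self: "tdvd_inf c L \<Longrightarrow> tpart L c = c"
  by (simp add: tdvd_inf_def pos_tuple_def tpart_def Lpart_eq_self)

lemma tpart_1: "pos_tuple m \<Longrightarrow> tpart 1 m = (\<lambda>_. 1)"
  by (simp add: pos_tuple_def tpart_def Lpart_eq_1)

lemma tpart_mult_coprime:
  "coprime L L' \<Longrightarrow> pos_tuple m \<Longrightarrow> tpart (L * L') m = (\<lambda>i. tpart L m i * tpart L' m i)"
  by (simp add: pos_tuple_def tpart_def Lpart_mult_coprime)

lemma tdvd_inf_mult_coprime_split:
  assumes "coprime L L'" "tdvd_inf c (L * L')"
  shows "(\<lambda>i. tpart L c i * tpart L' c i) = c"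
proof -
  have "pos_tuple c"
    using assms(2) by (simp add: tdvd_inf_def)
  then have "(\<lambda>i. tpart L c i * tpart L' c i) = tpart (L * L') c"
    using assms(1) by (simp add: tpart_mult_coprime)
  also have "\<dots> = c"
    using assms(2) by (rule tpart_eq_self)
  finally show ?thesis .
qed

lemma tdvd_inf_1_iff: "tdvd_inf a 1 \<longleftrightarrow> a = (\<lambda>_. 1)"
proof
  assume a: "tdvd_inf a 1"
  then have "pos_tuple a"
    by (simp add: tdvd_inf_def)
  then show "a = (\<lambda>_. 1)"
    using tpart_eq_self[OF a] tpart_1[of a] by simp
qed (simp add: tdvd_inf_def pos_tuple_def supp_in_def)

lemma tdvd_inf_mult:
  "tdvd_inf a L \<Longrightarrow> tdvd_inf b L' \<Longrightarrow> tdvd_inf (\<lambda>i. a i * b i) (L * L')"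
  using supp_in_mono[of L _ "L * L'"] supp_in_mono[of L' _ "L * L'"]
  by (auto simp: tdvd_inf_def pos_tuple_def intro: supp_in_mult)

lemma tpart_mult_tdvd_inf:
  assumes "coprime L L'" "tdvd_inf a L" "tdvd_inf b L'"
  shows "tpart L (\<lambda>i. a i * b i) = a"
proof
  fix i
  have "0 < a i" "0 < b i" "supp_in L (a i)" "supp_in L' (b i)"
    using assms(2,3) by (auto simp: tdvd_inf_def pos_tuple_def)
  moreover have "coprime (b i) L"
    using coprime_if_supp_in[OF \<open>supp_in L' (b i)\<close>] assms(1) by (simp add: coprime_commute)
  ultimately show "tpart L (\<lambda>i. a i * b i) i = a i"
    by (simp add: tpart_def Lpart_mult Lpart_eq_self Lpart_eq_1)
qed

lemma bij_betw_tuple_mult: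
  assumes "coprime L L'"
  shows "bij_betw (\<lambda>(a, b). \<lambda>i. a i * b i) ({a. tdvd_inf a L} \<times> {b. tdvd_inf b L'})
           {c. tdvd_inf c (L * L')}"
proof (rule bij_betw_byWitness[where f' = "\<lambda>c. (tpart L c, tpart L' c)"])
  have "tpart L' (\<lambda>i. a i * b i) = b" if "tdvd_inf a L" "tdvd_inf b L'" for a b
    using tpart_mult_tdvd_inf[of L' L b a] assms that by (simp add: coprime_commute mult.commute)
  then show "\<forall>p \<in> {a. tdvd_inf a L} \<times> {b. tdvd_inf b L'}.
      (\<lambda>c. (tpart L c, tpart L' c)) ((\<lambda>(a, b). \<lambda>i. a i * b i) p) = p"
    using tpart_mult_tdvd_inf[OF assms] by auto
  show "\<forall>c \<in> {c. tdvd_inf c (L * L')}.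
      (\<lambda>(a, b). \<lambda>i. a i * b i) ((\<lambda>c. (tpart L c, tpart L' c)) c) = c"
    using tdvd_inf_mult_coprime_split[OF assms] by auto
  show "(\<lambda>(a, b). \<lambda>i. a i * b i) ` ({a. tdvd_inf a L} \<times> {b. tdvd_inf b L'}) \<subseteq> {c. tdvd_inf c (L * L')}"
    by (auto intro: tdvd_inf_mult)
  show "(\<lambda>c. (tpart L c, tpart L' c)) ` {c. tdvd_inf c (L * L')} \<subseteq> {a. tdvd_inf a L} \<times> {b. tdvd_inf b L'}"
  proof (rule image_subsetI)
    fix c assume "c \<in> {c. tdvd_inf c (L * L')}"
    then have "pos_tuple c"
      by (simp add: tdvd_inf_def)
    then show "(tpart L c, tpart L' c) \<in> {a. tdvd_inf a L} \<times> {b. tdvd_inf b L'}"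
      by (simp add: tpart_tdvd_inf)
  qed
qed

lemma tdvd_inf_imp_all_powers_of:
  assumes "prime p" "supp_in p L" "tdvd_inf a L"
  shows "all_powers_of p a"
  unfolding all_powers_of_def
proof
  fix i
  have "0 < a i" "supp_in p (a i)"
    using assms(3) supp_in_trans[OF assms(2)] by (auto simp: tdvd_inf_def pos_tuple_def)
  then show "\<exists>k. a i = p ^ k"
    using supp_in_prime_imp_power[OF assms(1)] by blast
qed

section \<open>The Moebius function summed over divisors\<close>

lemma squarefree_mult_imp_coprime:
  fixes a b :: "'a :: semiring_gcd"
  assumes "squarefree (a * b)"
  shows "coprime a b"
proof -
  have "(gcd a b)\<^sup>2 dvd a * b"
    by (simp add: power2_eq_square mult_dvd_mono)
  with assms have "is_unit (gcd a b)"
    by (rule squarefreeD)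
  then show ?thesis
    by (simp only: is_unit_gcd)
qed

lemma squarefree_dvdI:
  fixes x y :: nat
  assumes "squarefree x" "y \<noteq> 0" "prime_factors x \<subseteq> prime_factors y"
  shows "x dvd y"
proof -
  have "x \<noteq> 0"
    using assms(1) by (metis not_squarefree_0)
  have "multiplicity p x \<le> multiplicity p y" if "prime p" for p
  proof (cases "p \<in> prime_factors x")
    case True
    then have "0 < multiplicity p y"
      using assms(3) by (auto simp: prime_factors_multiplicity)
    moreover have "multiplicity p x \<le> 1"
      using assms(1) \<open>x \<noteq> 0\<close> that by (simp add: squarefree_factorial_semiring'')
    ultimately show ?thesis
      by simp
  next
    case False
    then show ?thesis
      using that by (simp add: prime_factors_multiplicity)
  qed
  then show ?thesis
    using \<open>x \<noteq> 0\<close> assms(2) by (simp add: prime_multiplicity_le_imp_dvd)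
qed

lemma prod_prime_factors_squarefree:
  fixes n :: nat
  assumes "squarefree n"
  shows "\<Prod>(prime_factors n) = n"
proof -
  have "n \<noteq> 0"
    using assms by (metis not_squarefree_0)
  have "\<Prod>(prime_factors n) = (\<Prod>p\<in>prime_factors n. p ^ multiplicity p n)"
    using assms \<open>n \<noteq> 0\<close> by (intro prod.cong) (simp_all add: squarefree_factorial_semiring')
  also have "\<dots> = n"
    using prod_prime_factors[OF \<open>n \<noteq> 0\<close>] by simp
  finally show ?thesis .
qed

lemma
  fixes X :: "nat set"
  assumes "finite X" "\<And>p. p \<in> X \<Longrightarrow> prime p"
  shows prime_factors_prod_primes: "prime_factors (\<Prod>X) = X"
    and squarefree_prod_primes: "squarefree (\<Prod>X)"
proof -
  have "0 \<notin> (\<lambda>p. p) ` X"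
    using assms(2)[of 0] by auto
  then show "prime_factors (\<Prod>X) = X"
    using assms by (simp add: prime_factors_prod prime_prime_factors)
  show "squarefree (\<Prod>X)"
    using assms(2) by (intro squarefree_prod_coprime) (auto intro: primes_coprime squarefree_prime)
qed

lemma mu_prod_primes:
  "finite X \<Longrightarrow> (\<And>p. p \<in> X \<Longrightarrow> prime p) \<Longrightarrow> mu (\<Prod>X) = (-1) ^ card X"
  by (simp add: mu_def prime_factors_prod_primes squarefree_prod_primes)

lemma bij_betw_prod_squarefree_divisors:
  fixes K :: nat
  assumes "0 < K"
  shows "bij_betw (\<lambda>X. \<Prod>X) (Pow (prime_factors K)) {L. L dvd K \<and> squarefree L}"
proof (rule bij_betw_byWitness[where f' = prime_factors])
  have primes: "finite X" "\<And>p. p \<in> X \<Longrightarrow> prime p" if "X \<subseteq> prime_factors K" for X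
    using that finite_subset[OF that] by (auto simp: in_prime_factors_iff)
  show "\<forall>X\<in>Pow (prime_factors K). prime_factors (\<Prod>X) = X"
    using primes prime_factors_prod_primes by blast
  show "\<forall>L\<in>{L. L dvd K \<and> squarefree L}. \<Prod>(prime_factors L) = L"
    by (simp add: prod_prime_factors_squarefree)
  show "(\<lambda>X. \<Prod>X) ` Pow (prime_factors K) \<subseteq> {L. L dvd K \<and> squarefree L}"
  proof (rule image_subsetI)
    fix X assume "X \<in> Pow (prime_factors K)"
    then have X: "X \<subseteq> prime_factors K"
      by simp
    show "\<Prod>X \<in> {L. L dvd K \<and> squarefree L}"
      using squarefree_dvdI[of "\<Prod>X" K] prime_factors_prod_primes[OF primes[OF X]]
        squarefree_prod_primes[OF primes[OF X]] X assms by simp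
  qed
  show "prime_factors ` {L. L dvd K \<and> squarefree L} \<subseteq> Pow (prime_factors K)"
    using assms dvd_prime_factors[of K] by (intro image_subsetI) simp
qed

lemma sum_mu_divisors:
  assumes "0 < K"
  shows "(\<Sum>L | L dvd K. mu L) = (if K = 1 then 1 else 0)"
proof -
  have "(\<Sum>L | L dvd K. mu L) = (\<Sum>L | L dvd K \<and> squarefree L. mu L)"
    using assms by (intro sum.mono_neutral_right) (auto simp: mu_def)
  also have "\<dots> = (\<Sum>X\<in>Pow (prime_factors K). mu (\<Prod>X))"
    using sum.reindex_bij_betw[OF bij_betw_prod_squarefree_divisors[OF assms], of mu] by simp
  also have "\<dots> = (\<Sum>X\<in>Pow (prime_factors K). (-1) ^ card X)"
    by (intro sum.cong refl mu_prod_primes)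
       (auto intro: finite_subset simp: in_prime_factors_iff)
  also have "\<dots> = (\<Prod>p\<in>prime_factors K. 1 - 1)"
    using prod_diff_conv_sum[of "prime_factors K" "\<lambda>_. 1 :: int" "\<lambda>_. 1"] by simp
  also have "\<dots> = (if K = 1 then 1 else 0)"
  proof (cases "K = 1")
    case False
    then obtain p where "prime p" "p dvd K"
      using prime_factor_nat by blast
    with assms have "p \<in> prime_factors K"
      by (simp add: in_prime_factors_iff)
    then have "prime_factors K \<noteq> {}"
      by blast
    with False show ?thesis
      by (simp add: card_gt_0_iff)
  qed simp
  finally show ?thesis .
qed

lemma sum_divisors_mu_inversion:
  fixes T :: "nat \<Rightarrow> 'a :: comm_ring_1"
  assumes "0 < N"
  shows "(\<Sum>L | L dvd N. of_int (mu L) * (\<Sum>L' | L' dvd N div L. T (L * L'))) = T 1"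
proof -
  define D where "D = {K. K dvd N}"
  have "finite D"
    using assms by (simp add: D_def)
  have inner: "(\<Sum>L' | L' dvd N div L. T (L * L')) = (\<Sum>K | K \<in> D \<and> L dvd K. T K)"
    if "L \<in> D" for L
  proof (rule sum.reindex_bij_witness[where i = "\<lambda>K. K div L" and j = "\<lambda>L'. L * L'"])
    show "L * L' \<in> {K. K \<in> D \<and> L dvd K}" if "L' \<in> {L'. L' dvd N div L}" for L'
      using that \<open>L \<in> D\<close> assms dvd_div_iff_mult[of L N L'] by (auto simp: D_def mult.commute)
    show "K div L \<in> {L'. L' dvd N div L}" if "K \<in> {K. K \<in> D \<and> L dvd K}" for K
      using that \<open>L \<in> D\<close> by (auto simp: D_def div_dvd_div)
  qed (use \<open>L \<in> D\<close> assms in \<open>auto simp: D_def\<close>)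
  have "(\<Sum>L | L dvd N. of_int (mu L) * (\<Sum>L' | L' dvd N div L. T (L * L')))
      = (\<Sum>L\<in>D. \<Sum>K | K \<in> D \<and> L dvd K. of_int (mu L) * T K)"
    by (simp add: D_def inner sum_distrib_left)
  also have "\<dots> = (\<Sum>K\<in>D. \<Sum>L | L \<in> D \<and> L dvd K. of_int (mu L) * T K)"
    by (rule sum.swap_restrict[OF \<open>finite D\<close> \<open>finite D\<close>])
  also have "\<dots> = (\<Sum>K\<in>D. of_int (\<Sum>L | L dvd K. mu L) * T K)"
    by (intro sum.cong refl) (auto simp: D_def sum_distrib_right intro: sum.cong dvd_trans)
  also have "\<dots> = (\<Sum>K\<in>D. if K = 1 then T K else 0)"
  proof (intro sum.cong refl)
    fix K assume "K \<in> D"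
    with assms have "0 < K"
      by (auto simp: D_def intro: gr0I)
    then show "of_int (\<Sum>L | L dvd K. mu L) * T K = (if K = 1 then T K else 0)"
      by (simp only: sum_mu_divisors) simp
  qed
  also have "\<dots> = T 1"
    using \<open>finite D\<close> by (simp add: D_def)
  finally show ?thesis .
qed

section \<open>Rearranging infinite sums\<close>

lemma summable_on_finite_sum:
  fixes f :: "'i \<Rightarrow> 'a \<Rightarrow> 'b :: topological_comm_monoid_add"
  assumes "finite I" "\<And>i. i \<in> I \<Longrightarrow> f i summable_on A"
  shows "(\<lambda>x. \<Sum>i\<in>I. f i x) summable_on A"
  using assms by (induction I rule: finite_induct) (auto intro: summable_on_add)

lemma infsum_finite_sum:
  fixes f :: "'i \<Rightarrow> 'a \<Rightarrow> 'b :: {topological_comm_monoid_add, t2_space}"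
  assumes "finite I" "\<And>i. i \<in> I \<Longrightarrow> f i summable_on A"
  shows "infsum (\<lambda>x. \<Sum>i\<in>I. f i x) A = (\<Sum>i\<in>I. infsum (f i) A)"
  using assms
proof (induction I rule: finite_induct)
  case (insert i I)
  then show ?case
    by (simp add: infsum_add summable_on_finite_sum)
qed simp

lemma
  fixes f :: "'c \<Rightarrow> 'b :: banach"
  assumes "bij_betw h (A \<times> B) C" "f summable_on C"
  shows infsum_infsum_reindex_bij_betw:
      "infsum (\<lambda>a. infsum (\<lambda>b. f (h (a, b))) B) A = infsum f C"
    and summable_on_infsum_reindex_bij_betw:
      "(\<lambda>a. infsum (\<lambda>b. f (h (a, b))) B) summable_on A"
proof -
  have "(\<lambda>p. f (h p)) summable_on A \<times> B"
    using summable_on_reindex_bij_betw[OF assms(1)] assms(2) by blast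
  then have summable: "(\<lambda>(a, b). f (h (a, b))) summable_on A \<times> B"
    by (simp add: case_prod_beta')
  have "infsum (\<lambda>a. infsum (\<lambda>b. f (h (a, b))) B) A = infsum (\<lambda>(a, b). f (h (a, b))) (A \<times> B)"
    using infsum_Sigma'_banach[OF summable] .
  also have "\<dots> = infsum f C"
    using infsum_reindex_bij_betw[OF assms(1), of f] by (simp add: case_prod_beta')
  finally show "infsum (\<lambda>a. infsum (\<lambda>b. f (h (a, b))) B) A = infsum f C" .
  show "(\<lambda>a. infsum (\<lambda>b. f (h (a, b))) B) summable_on A"
    using summable_on_Sigma_banach[OF summable] .
qed

section \<open>Twisting a tuple\<close>

locale multiplicative_tuple_map =
  fixes \<alpha> :: "('j \<Rightarrow> nat) \<Rightarrow> ('d \<Rightarrow> nat) \<Rightarrow> ('d \<Rightarrow> nat)"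
  assumes alpha_pos: "\<And>a m. pos_tuple a \<Longrightarrow> pos_tuple m \<Longrightarrow> pos_tuple (\<alpha> a m)"
    and alpha_mult: "\<And>a m a' m' L1 L2. 0 < L1 \<Longrightarrow> 0 < L2 \<Longrightarrow> coprime L1 L2 \<Longrightarrow>
         tdvd_inf a L1 \<Longrightarrow> tdvd_inf m L1 \<Longrightarrow> tdvd_inf a' L2 \<Longrightarrow> tdvd_inf m' L2 \<Longrightarrow>
         \<alpha> (\<lambda>j. a j * a' j) (\<lambda>i. m i * m' i) = (\<lambda>i. \<alpha> a m i * \<alpha> a' m' i)"
    and alpha_local: "\<And>p a m. prime p \<Longrightarrow> all_powers_of p a \<Longrightarrow> all_powers_of p m \<Longrightarrow>
         all_powers_of p (\<alpha> a m)"
begin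

lemma alpha_1: "\<alpha> (\<lambda>_. 1) (\<lambda>_. 1) = (\<lambda>_. 1)"
proof
  fix i
  have one: "tdvd_inf (\<lambda>_. 1 :: nat) 1" "tdvd_inf (\<lambda>_. 1 :: nat) 1"
    using tdvd_inf_1_iff by blast+
  have "\<alpha> (\<lambda>j. 1 * 1) (\<lambda>i. 1 * 1) = (\<lambda>i. \<alpha> (\<lambda>_. 1) (\<lambda>_. 1) i * \<alpha> (\<lambda>_. 1) (\<lambda>_. 1) i)"
    by (rule alpha_mult[OF _ _ _ one one]) simp_all
  then have "\<alpha> (\<lambda>_. 1) (\<lambda>_. 1) i = \<alpha> (\<lambda>_. 1) (\<lambda>_. 1) i * \<alpha> (\<lambda>_. 1) (\<lambda>_. 1) i"
    by (metis mult_1)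
  moreover have "0 < \<alpha> (\<lambda>_. 1) (\<lambda>_. 1) i"
    using alpha_pos[of "\<lambda>_. 1" "\<lambda>_. 1"] by (simp add: pos_tuple_def)
  ultimately show "\<alpha> (\<lambda>_. 1) (\<lambda>_. 1) i = 1"
    by simp
qed

lemma supp_in_alpha:
  assumes "tdvd_inf a L" "tdvd_inf m L"
  shows "supp_in L (\<alpha> a m i)"
proof (cases "L = 0")
  case True
  then show ?thesis
    by (simp add: supp_in_def)
next
  case False
  then show ?thesis
    using assms
  proof (induction L arbitrary: a m rule: less_induct)
    case (less L)
    show ?case
    proof (cases "L = 1")
      case True
      with less.prems have "a = (\<lambda>_. 1)" "m = (\<lambda>_. 1)"
        using tdvd_inf_1_iff by blast+
      then show ?thesis
        using alpha_1 supp_in_1 by simp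
    next
      case False
      \<comment> \<open>Split \<open>L = e f\<close> into its \<open>p\<close>-part \<open>e\<close> and the cofactor \<open>f < L\<close>: locality makes the
        \<open>e\<close>-factor of \<open>\<alpha>\<close> a power of \<open>p\<close>, and induction handles the \<open>f\<close>-factor.\<close>
      then obtain p where p: "prime p" "p dvd L"
        using prime_factor_nat by blast
      define e where "e = Lpart p L"
      have "0 < L"
        using less.prems(1) by simp
      obtain f where f: "e * f = L" "supp_in p e" "coprime f p"
        using LpartE[OF \<open>0 < L\<close>, of p] unfolding e_def .
      have "coprime e f"
        using f(2,3) by (rule coprime_if_supp_in)
      have "0 < e * f"
        using f(1) \<open>0 < L\<close> by simp
      then have "0 < e" "0 < f"
        by simp_all
      have "\<not> p dvd f"
      proof
        assume "p dvd f"
        then have "is_unit p"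
          using coprime_common_divisor[OF f(3) _ dvd_refl] by blast
        with p(1) show False
          using not_prime_unit by blast
      qed
      moreover have "p dvd e * f"
        using p(2) f(1) by simp
      ultimately have "p dvd e"
        using p(1) by (simp add: prime_dvd_mult_iff)
      then have "p \<le> e"
        using \<open>0 < e\<close> by (rule dvd_imp_le)
      then have "1 * f < e * f"
        using prime_gt_1_nat[OF p(1)] \<open>0 < f\<close> by (intro mult_strict_right_mono) simp_all
      then have "f < L"
        using f(1) by simp
      define ae where "ae = tpart e a"
      define af where "af = tpart f a"
      define me where "me = tpart e m"
      define mf where "mf = tpart f m"
      have "pos_tuple a" "pos_tuple m"
        using less.prems(2,3) by (simp_all add: tdvd_inf_def)
      then have tdvd: "tdvd_inf ae e" "tdvd_inf me e" "tdvd_inf af f" "tdvd_inf mf f"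
        by (simp_all add: ae_def af_def me_def mf_def tpart_tdvd_inf)
      have split: "(\<lambda>j. ae j * af j) = a" "(\<lambda>i. me i * mf i) = m"
        unfolding ae_def af_def me_def mf_def
        by (rule tdvd_inf_mult_coprime_split[OF \<open>coprime e f\<close>], simp add: f(1) less.prems)+
      have "\<alpha> a m = (\<lambda>i. \<alpha> ae me i * \<alpha> af mf i)"
        using alpha_mult[OF \<open>0 < e\<close> \<open>0 < f\<close> \<open>coprime e f\<close> tdvd] unfolding split .
      then have "\<alpha> a m i = \<alpha> ae me i * \<alpha> af mf i"
        by simp
      moreover have "supp_in L (\<alpha> ae me i)"
      proof -
        have "all_powers_of p (\<alpha> ae me)"
          using alpha_local[OF p(1) tdvd_inf_imp_all_powers_of[OF p(1) f(2) tdvd(1)]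
              tdvd_inf_imp_all_powers_of[OF p(1) f(2) tdvd(2)]] .
        then obtain k where "\<alpha> ae me i = p ^ k"
          unfolding all_powers_of_def by blast
        then have "supp_in p (\<alpha> ae me i)"
          using supp_in_prime_power[OF p(1)] by simp
        then show ?thesis
          using p(2) by (rule supp_in_mono)
      qed
      moreover have "supp_in L (\<alpha> af mf i)"
      proof -
        have "supp_in f (\<alpha> af mf i)"
          using \<open>0 < f\<close> by (intro less.IH[OF \<open>f < L\<close> _ tdvd(3,4)]) simp
        moreover have "f dvd L"
          unfolding f(1)[symmetric] by simp
        ultimately show ?thesis
          by (rule supp_in_mono)
      qed
      ultimately show ?thesis
        by (simp add: supp_in_mult)
    qed
  qed
qed

definition twist :: "nat \<Rightarrow> ('j \<Rightarrow> nat) \<Rightarrow> ('d \<Rightarrow> nat) \<Rightarrow> ('d \<Rightarrow> nat)" where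
  "twist L a m = (\<lambda>i. \<alpha> a (tpart L m) i * (m i div tpart L m i))"

lemma
  assumes "tdvd_inf a L" "pos_tuple m"
  shows supp_in_alpha_tpart: "supp_in L (\<alpha> a (tpart L m) i)"
    and alpha_tpart_pos: "0 < \<alpha> a (tpart L m) i"
  using supp_in_alpha[OF assms(1) tpart_tdvd_inf[OF assms(2)]]
    alpha_pos[of a "tpart L m"] assms tpart_tdvd_inf[OF assms(2), of L]
  by (auto simp: tdvd_inf_def pos_tuple_def)

lemma pos_tuple_twist:
  assumes "tdvd_inf a L" "pos_tuple m"
  shows "pos_tuple (twist L a m)"
  unfolding pos_tuple_def twist_def
proof
  fix i
  have "0 < \<alpha> a (tpart L m) i"
    using assms by (rule alpha_tpart_pos)
  moreover have "0 < m i"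
    using assms(2) by (simp add: pos_tuple_def)
  then have "0 < m i div tpart L m i"
    using Lpart_dvd[of "m i" L] Lpart_pos[of "m i" L] by (simp add: tpart_def div_greater_zero_iff dvd_imp_le)
  ultimately show "0 < \<alpha> a (tpart L m) i * (m i div tpart L m i)"
    by simp
qed

lemma tpart_twist:
  assumes "coprime L L'" "tdvd_inf a L" "pos_tuple m"
  shows "tpart L' (twist L a m) = tpart L' m"
proof
  fix i
  have "0 < m i"
    using assms(3) by (simp add: pos_tuple_def)
  then show "tpart L' (twist L a m) i = tpart L' m i"
    using Lpart_mult_cofactor[OF assms(1) _ alpha_tpart_pos[OF assms(2,3)] supp_in_alpha_tpart[OF assms(2,3)]]
    by (simp add: twist_def tpart_def)
qed

lemma twist_twist:
  assumes "0 < L" "0 < L'" "coprime L L'" "tdvd_inf a L" "tdvd_inf b L'" "pos_tuple m"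
  shows "twist L' b (twist L a m) = twist (L * L') (\<lambda>j. a j * b j) m"
proof
  fix i
  have "0 < m i"
    using assms(6) by (simp add: pos_tuple_def)
  have "twist L a m i div tpart L' m i = \<alpha> a (tpart L m) i * (m i div tpart (L * L') m i)"
    using mult_cofactor_div_Lpart[OF assms(3) \<open>0 < m i\<close> alpha_tpart_pos[OF assms(4,6)] supp_in_alpha_tpart[OF assms(4,6)]]
    by (simp add: twist_def tpart_def)
  moreover have "\<alpha> (\<lambda>j. a j * b j) (tpart (L * L') m) = (\<lambda>i. \<alpha> a (tpart L m) i * \<alpha> b (tpart L' m) i)"
    unfolding tpart_mult_coprime[OF assms(3,6)]
    using assms tpart_tdvd_inf by (intro alpha_mult) simp_all
  ultimately show "twist L' b (twist L a m) i = twist (L * L') (\<lambda>j. a j * b j) m i"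
    using tpart_twist[OF assms(3,4,6)] by (simp add: twist_def ac_simps)
qed

lemma twist_1: "pos_tuple m \<Longrightarrow> twist 1 (\<lambda>_. 1) m = m"
  using tpart_1[of m] alpha_1 by (simp add: twist_def)

end

locale twisted_divisor_expansion = multiplicative_tuple_map \<alpha>
  for \<alpha> :: "('j \<Rightarrow> nat) \<Rightarrow> ('d \<Rightarrow> nat) \<Rightarrow> ('d \<Rightarrow> nat)" +
  fixes A :: "('j \<Rightarrow> nat) \<Rightarrow> ('d \<Rightarrow> nat) \<Rightarrow> complex"
    and F G :: "('d \<Rightarrow> nat) \<Rightarrow> nat \<Rightarrow> complex"
  assumes A_one: "A (\<lambda>_. 1) (\<lambda>_. 1) = 1"
    and A_mult: "\<And>a m a' m' L1 L2. 0 < L1 \<Longrightarrow> 0 < L2 \<Longrightarrow> coprime L1 L2 \<Longrightarrow>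
         tdvd_inf a L1 \<Longrightarrow> tdvd_inf m L1 \<Longrightarrow> tdvd_inf a' L2 \<Longrightarrow> tdvd_inf m' L2 \<Longrightarrow>
         A (\<lambda>j. a j * a' j) (\<lambda>i. m i * m' i) = A a m * A a' m'"
    and conv: "\<And>N m L. squarefree N \<Longrightarrow> pos_tuple m \<Longrightarrow> L dvd N \<Longrightarrow>
         (\<lambda>a. norm (A a (tpart L m) * G (\<lambda>i. \<alpha> a (tpart L m) i * (m i div tpart L m i)) (N div L)))
           summable_on {a. tdvd_inf a L}"
    and expand: "\<And>N m. squarefree N \<Longrightarrow> pos_tuple m \<Longrightarrow>
         F m N = (\<Sum>L | L dvd N.
           infsum (\<lambda>a. A a (tpart L m) * G (\<lambda>i. \<alpha> a (tpart L m) i * (m i div tpart L m i)) (N div L))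
             {a. tdvd_inf a L})"
begin

definition twisted_sum :: "('d \<Rightarrow> nat) \<Rightarrow> nat \<Rightarrow> nat \<Rightarrow> complex" where
  "twisted_sum m N K = infsum (\<lambda>c. A c (tpart K m) * G (twist K c m) (N div K)) {c. tdvd_inf c K}"

lemma F_eq_sum_twisted_sum:
  "squarefree N \<Longrightarrow> pos_tuple m \<Longrightarrow> F m N = (\<Sum>L | L dvd N. twisted_sum m N L)"
  by (simp add: expand twisted_sum_def twist_def)

lemma twisted_summand_summable:
  "squarefree N \<Longrightarrow> pos_tuple m \<Longrightarrow> K dvd N \<Longrightarrow>
    (\<lambda>c. A c (tpart K m) * G (twist K c m) (N div K)) summable_on {c. tdvd_inf c K}"
  unfolding twist_def by (rule abs_summable_summable) (rule conv)

lemma twisted_sum_1: "pos_tuple m \<Longrightarrow> twisted_sum m N 1 = G m N"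
proof -
  have "{c :: 'j \<Rightarrow> nat. tdvd_inf c 1} = {\<lambda>_. 1}"
    using tdvd_inf_1_iff by blast
  moreover assume "pos_tuple m"
  ultimately show ?thesis
    using twist_1[of m] tpart_1[of m] A_one by (simp add: twisted_sum_def)
qed

lemma A_twist_mult:
  assumes "0 < L" "0 < L'" "coprime L L'" "tdvd_inf a L" "tdvd_inf b L'" "pos_tuple m"
  shows "A a (tpart L m) * A b (tpart L' (twist L a m)) = A (\<lambda>j. a j * b j) (tpart (L * L') m)"
  unfolding tpart_twist[OF assms(3,4,6)] tpart_mult_coprime[OF assms(3,6)]
  using assms tpart_tdvd_inf by (intro A_mult[symmetric]) simp_all

lemma infsum_F_twist:
  assumes N: "squarefree N" and m: "pos_tuple m" and "L dvd N"
  shows "infsum (\<lambda>a. A a (tpart L m) * F (twist L a m) (N div L)) {a. tdvd_inf a L}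
           = (\<Sum>L' | L' dvd N div L. twisted_sum m N (L * L'))"
proof -
  define D where "D = {L'. L' dvd N div L}"
  define g where "g L' = (\<lambda>a. infsum (\<lambda>b. A (\<lambda>j. a j * b j) (tpart (L * L') m) *
      G (twist (L * L') (\<lambda>j. a j * b j) m) (N div (L * L'))) {b. tdvd_inf b L'})" for L'
  have "0 < N"
    using N by (intro gr0I) auto
  then have "0 < L" "L * (N div L) = N"
    using \<open>L dvd N\<close> by (auto intro: gr0I)
  then have "N div L dvd N" "0 < N div L"
    using \<open>0 < N\<close> by (metis dvd_triv_right, intro gr0I) auto
  then have "squarefree (N div L)" "finite D"
    using N by (auto simp: D_def intro: squarefree_mono)
  have L': "0 < L'" "coprime L L'" "L * L' dvd N" if "L' \<in> D" for L'
  proof -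
    show "L * L' dvd N"
      using that \<open>L * (N div L) = N\<close> unfolding D_def by (metis mem_Collect_eq mult_dvd_mono dvd_refl)
    then show "coprime L L'"
      using N squarefree_mono squarefree_mult_imp_coprime by blast
    show "0 < L'"
      using \<open>L * L' dvd N\<close> \<open>0 < N\<close> by (auto intro: gr0I)
  qed
  have g: "g L' summable_on {a. tdvd_inf a L}"
          "infsum (g L') {a. tdvd_inf a L} = twisted_sum m N (L * L')" if "L' \<in> D" for L'
    using summable_on_infsum_reindex_bij_betw[OF bij_betw_tuple_mult[OF L'(2)[OF that]]
        twisted_summand_summable[OF N m L'(3)[OF that]]]
      infsum_infsum_reindex_bij_betw[OF bij_betw_tuple_mult[OF L'(2)[OF that]]
        twisted_summand_summable[OF N m L'(3)[OF that]]]
    by (simp_all add: g_def twisted_sum_def)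
  have "A a (tpart L m) * F (twist L a m) (N div L) = (\<Sum>L'\<in>D. g L' a)" if "tdvd_inf a L" for a
  proof -
    have "A a (tpart L m) * F (twist L a m) (N div L)
        = (\<Sum>L'\<in>D. A a (tpart L m) * twisted_sum (twist L a m) (N div L) L')"
      using F_eq_sum_twisted_sum[OF \<open>squarefree (N div L)\<close> pos_tuple_twist[OF that m]]
      by (simp add: D_def sum_distrib_left)
    also have "\<dots> = (\<Sum>L'\<in>D. g L' a)"
    proof (intro sum.cong refl)
      fix L' assume "L' \<in> D"
      note L'[OF this]
      then show "A a (tpart L m) * twisted_sum (twist L a m) (N div L) L' = g L' a"
        unfolding twisted_sum_def g_def infsum_cmult_right'[symmetric]
        using that \<open>0 < L\<close> m
        by (intro infsum_cong) (simp add: A_twist_mult[symmetric] twist_twist div_mult2_eq)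
    qed
    finally show ?thesis .
  qed
  then have "infsum (\<lambda>a. A a (tpart L m) * F (twist L a m) (N div L)) {a. tdvd_inf a L}
      = infsum (\<lambda>a. \<Sum>L'\<in>D. g L' a) {a. tdvd_inf a L}"
    by (intro infsum_cong) simp
  also have "\<dots> = (\<Sum>L'\<in>D. infsum (g L') {a. tdvd_inf a L})"
    using \<open>finite D\<close> g(1) by (rule infsum_finite_sum)
  also have "\<dots> = (\<Sum>L'\<in>D. twisted_sum m N (L * L'))"
    using g(2) by simp
  finally show ?thesis
    by (simp add: D_def)
qed

theorem G_eq_sum_mu_infsum_F:
  assumes "squarefree N" "pos_tuple m"
  shows "G m N = (\<Sum>L | L dvd N. of_int (mu L) *
           infsum (\<lambda>a. A a (tpart L m) * F (twist L a m) (N div L)) {a. tdvd_inf a L})"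
proof -
  have "0 < N"
    using assms(1) by (intro gr0I) auto
  have "(\<Sum>L | L dvd N. of_int (mu L) *
           infsum (\<lambda>a. A a (tpart L m) * F (twist L a m) (N div L)) {a. tdvd_inf a L})
      = (\<Sum>L | L dvd N. of_int (mu L) * (\<Sum>L' | L' dvd N div L. twisted_sum m N (L * L')))"
    using assms by (simp add: infsum_F_twist)
  also have "\<dots> = twisted_sum m N 1"
    using \<open>0 < N\<close> by (rule sum_divisors_mu_inversion)
  also have "\<dots> = G m N"
    using assms(2) by (rule twisted_sum_1)
  finally show ?thesis ..
qed

end

theorem lemma4p1:
  fixes F G :: "('d::finite \<Rightarrow> nat) \<Rightarrow> nat \<Rightarrow> complex"
    and A :: "('j::finite \<Rightarrow> nat) \<Rightarrow> ('d \<Rightarrow> nat) \<Rightarrow> complex"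
    and \<alpha> :: "('j \<Rightarrow> nat) \<Rightarrow> ('d \<Rightarrow> nat) \<Rightarrow> ('d \<Rightarrow> nat)"
  assumes alpha_pos: "\<And>a m. pos_tuple a \<Longrightarrow> pos_tuple m \<Longrightarrow> pos_tuple (\<alpha> a m)"
    and A_one: "A (\<lambda>_. 1) (\<lambda>_. 1) = 1"
    and A_mult: "\<And>a m a' m' L1 L2. 0 < L1 \<Longrightarrow> 0 < L2 \<Longrightarrow> coprime L1 L2 \<Longrightarrow>
         tdvd_inf a L1 \<Longrightarrow> tdvd_inf m L1 \<Longrightarrow> tdvd_inf a' L2 \<Longrightarrow> tdvd_inf m' L2 \<Longrightarrow>
         A (\<lambda>j. a j * a' j) (\<lambda>i. m i * m' i) = A a m * A a' m'"
    and alpha_mult: "\<And>a m a' m' L1 L2. 0 < L1 \<Longrightarrow> 0 < L2 \<Longrightarrow> coprime L1 L2 \<Longrightarrow>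
         tdvd_inf a L1 \<Longrightarrow> tdvd_inf m L1 \<Longrightarrow> tdvd_inf a' L2 \<Longrightarrow> tdvd_inf m' L2 \<Longrightarrow>
         \<alpha> (\<lambda>j. a j * a' j) (\<lambda>i. m i * m' i) = (\<lambda>i. \<alpha> a m i * \<alpha> a' m' i)"
    and alpha_local: "\<And>p a m. prime p \<Longrightarrow> all_powers_of p a \<Longrightarrow> all_powers_of p m \<Longrightarrow>
         all_powers_of p (\<alpha> a m)"
    and conv: "\<And>N m L. squarefree N \<Longrightarrow> pos_tuple m \<Longrightarrow> L dvd N \<Longrightarrow>
         (\<lambda>a. norm (A a (tpart L m) * G (\<lambda>i. \<alpha> a (tpart L m) i * (m i div tpart L m i)) (N div L)))
           summable_on {a. tdvd_inf a L}"
    and expand: "\<And>N m. squarefree N \<Longrightarrow> pos_tuple m \<Longrightarrow>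
         F m N = (\<Sum>L | L dvd N.
           infsum (\<lambda>a. A a (tpart L m) * G (\<lambda>i. \<alpha> a (tpart L m) i * (m i div tpart L m i)) (N div L))
             {a. tdvd_inf a L})"
    and N: "squarefree N"
    and m: "pos_tuple m"
  shows "G m N = (\<Sum>L | L dvd N. of_int (mu L) *
           infsum (\<lambda>a. A a (tpart L m) * F (\<lambda>i. \<alpha> a (tpart L m) i * (m i div tpart L m i)) (N div L))
             {a. tdvd_inf a L})"
proof -
  interpret twisted_divisor_expansion \<alpha> A F G
    by unfold_locales (fact assms)+
  show ?thesis
    using G_eq_sum_mu_infsum_F[OF N m] by (simp add: twist_def)
qed

end
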